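(* Let $(x_1,y_1),\dots,(x_n,y_n)\in\mathbb{R}^d\times\mathbb{R}$ be data with empirical measure $\widehat\mu=\frac1n\sum_{i=1}^n\delta_{x_i}$. Let $\sigma(z)=\max(z,0)$ and consider $f_t(x)=\sum_{j=1}^m w_j(t)\sigma(x^Tu_j(t))$ trained on the empirical risk $\frac1{2n}\sum_{i=1}^n(y_i-f_t(x_i))^2$ by the gradient flow $$\frac{dw_j}{dt}=\frac1n\sum_{i=1}^n(y_i-f_t(x_i))\sigma(x_i^Tu_j),\qquad \frac{du_j}{dt}=\frac1n\sum_{i=1}^n(y_i-f_t(x_i))\,w_j\,\mathbb{1}_{x_i^Tu_j\ge0}\,x_i,$$ with initialization $u_j(0)=\Theta_j/\sqrt m$, $w_j(0)=\mathrm{sgn}(\rho_0(\Theta_j))\|\Theta_j\|/\sqrt m$, where $\rho_0$ is a signed measure of finite total variation and $\Theta_j$ are sampled independently from $\rho_0$. Suppose the dynamics reaches a stationarity, with network function $\widehat f_\infty$ and stationary signed measure $\widehat\rho_\infty=\frac1m\sum_j s_j\delta_{\sqrt m\,u_j(\infty)}$, $s_j=\mathrm{sgn}(\rho_0(\Theta_j))$. Let $\widehat{\mathcal{H}}_\infty$ be the (at most rank $n$) RKHS associated with $|\widehat\rho_\infty|$ and $\widehat\mu$ (defined in the context). Then $$\widehat f_\infty\in\arg\min_{g\in\widehat{\mathcal{H}}_\infty}\frac1n\sum_{i=1}^n(y_i-g(x_i))^2.$$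
   Context: For a signed measure $\rho=\rho_+-\rho_-$, $|\rho|=\rho_++\rho_-$; $\mathrm{sgn}(\rho_0(\Theta))$ is the sign of $d\rho_0/d|\rho_0|$ at $\Theta$ and sampling from $\rho_0$ means sampling from normalized $|\rho_0|$. With $\mu$ a probability measure on $\mathbb{R}^d$ and $\rho$ a finite, compactly supported signed measure, define $\mathcal{T}:L^2_\mu\to L^2_{|\rho|}$, $(\mathcal{T}f)(\Theta)=\int f(x)\|\Theta\|\sigma(x^T\Theta)\mu(dx)$, with adjoint $(\mathcal{T}^\star p)(x)=\int p(\Theta)\|\Theta\|\sigma(x^T\Theta)|\rho|(d\Theta)$; $\mathcal{T}^\star\mathcal{T}$ is the integral operator with kernel $H(x,\tilde x)=\int\|\Theta\|^2\sigma(x^T\Theta)\sigma(\tilde x^T\Theta)|\rho|(d\Theta)$. With eigendecomposition $\mathcal{T}^\star\mathcal{T}=\sum_i\lambda_ie_ie_i^*$, $\lambda_i>0$, the RKHS is $\{\sum_ih_ie_i:\sum_ih_i^2/\lambda_i<\infty\}$. $\widehat{\mathcal H}_\infty$ is this space with $\mu=\widehat\mu$, $\rho=\widehat\rho_\infty$. "Stationarity" means the weights reach a point at which the gradient-flow vector field vanishes. *)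

theory Defs
  imports "HOL-Analysis.Analysis"
begin

definition relu :: "real \<Rightarrow> real" where
  "relu z = max z 0"

definition net :: "nat \<Rightarrow> (nat \<Rightarrow> real) \<Rightarrow> (nat \<Rightarrow> 'a::real_inner) \<Rightarrow> 'a \<Rightarrow> real" where
  "net m w u x = (\<Sum>j<m. w j * relu (x \<bullet> u j))"

definition flow_w :: "nat \<Rightarrow> (nat \<Rightarrow> 'a::real_inner) \<Rightarrow> (nat \<Rightarrow> real) \<Rightarrow> nat
    \<Rightarrow> (nat \<Rightarrow> real) \<Rightarrow> (nat \<Rightarrow> 'a) \<Rightarrow> nat \<Rightarrow> real" where
  "flow_w n x y m w u j =
     (1 / real n) * (\<Sum>i<n. (y i - net m w u (x i)) * relu (x i \<bullet> u j))"

definition flow_u :: "nat \<Rightarrow> (nat \<Rightarrow> 'a::real_inner) \<Rightarrow> (nat \<Rightarrow> real) \<Rightarrow> nat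
    \<Rightarrow> (nat \<Rightarrow> real) \<Rightarrow> (nat \<Rightarrow> 'a) \<Rightarrow> nat \<Rightarrow> 'a" where
  "flow_u n x y m w u j =
     (1 / real n) *\<^sub>R (\<Sum>i<n. ((y i - net m w u (x i)) * w j
        * (if x i \<bullet> u j \<ge> 0 then 1 else 0)) *\<^sub>R x i)"

text \<open>Mass of the discrete signed measure rho = (1/m) sum_j s_j delta_{theta_j} at the atom th.\<close>
definition atom_mass :: "nat \<Rightarrow> (nat \<Rightarrow> real) \<Rightarrow> (nat \<Rightarrow> 'a) \<Rightarrow> 'a \<Rightarrow> real" where
  "atom_mass m s th \<theta> = (1 / real m) * (\<Sum>j\<in>{j. j < m \<and> th j = \<theta>}. s j)"

text \<open>Kernel H(x,x') = integral of |Theta|^2 sigma(x^T Theta) sigma(x'^T Theta) d|rho|(Theta),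
  with |rho| = sum over atoms of |mass| delta.\<close>
definition kernelH :: "nat \<Rightarrow> (nat \<Rightarrow> real) \<Rightarrow> (nat \<Rightarrow> 'a::real_inner) \<Rightarrow> 'a \<Rightarrow> 'a \<Rightarrow> real" where
  "kernelH m s th x x' =
     (\<Sum>\<theta>\<in>th ` {..<m}. \<bar>atom_mass m s th \<theta>\<bar> * (norm \<theta>)\<^sup>2 * relu (x \<bullet> \<theta>) * relu (x' \<bullet> \<theta>))"

text \<open>The integral operator T* T on L^2 of the empirical measure (1/n) sum_i delta_{x_i}.\<close>
definition TstarT :: "nat \<Rightarrow> (nat \<Rightarrow> 'a::real_inner) \<Rightarrow> nat \<Rightarrow> (nat \<Rightarrow> real) \<Rightarrow> (nat \<Rightarrow> 'a)
    \<Rightarrow> ('a \<Rightarrow> real) \<Rightarrow> 'a \<Rightarrow> real" where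
  "TstarT n x m s th g z = (1 / real n) * (\<Sum>i<n. kernelH m s th z (x i) * g (x i))"

text \<open>e is an eigenfunction (nonzero element of L^2_mu) of K with eigenvalue lam;
  equalities in L^2_mu are equalities at the data points.\<close>
definition is_eigenfun :: "nat \<Rightarrow> (nat \<Rightarrow> 'a) \<Rightarrow> (('a \<Rightarrow> real) \<Rightarrow> 'a \<Rightarrow> real)
    \<Rightarrow> ('a \<Rightarrow> real) \<Rightarrow> real \<Rightarrow> bool" where
  "is_eigenfun n x K e lam \<longleftrightarrow>
     (\<exists>i<n. e (x i) \<noteq> 0) \<and> (\<forall>i<n. K e (x i) = lam * e (x i))"

text \<open>RKHS = { sum h_i e_i } over eigenfunctions with positive eigenvalues
  (finite-dimensional here), as a subset of L^2_mu.\<close>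
definition rkhs :: "nat \<Rightarrow> (nat \<Rightarrow> 'a) \<Rightarrow> (('a \<Rightarrow> real) \<Rightarrow> 'a \<Rightarrow> real) \<Rightarrow> ('a \<Rightarrow> real) set" where
  "rkhs n x K = {g. \<exists>F c. finite F \<and> F \<subseteq> {e. \<exists>lam>0. is_eigenfun n x K e lam}
       \<and> (\<forall>i<n. g (x i) = (\<Sum>e\<in>F. c e * e (x i)))}"

definition emp_risk :: "nat \<Rightarrow> (nat \<Rightarrow> 'a) \<Rightarrow> (nat \<Rightarrow> real) \<Rightarrow> ('a \<Rightarrow> real) \<Rightarrow> real" where
  "emp_risk n x y g = (1 / real n) * (\<Sum>i<n. (y i - g (x i))\<^sup>2)"

end

theory Submission
  imports Defs "HOL-Library.Function_Algebras"
begin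

text \<open>Stationarity in the outer weights says that the residual \<open>y - f\<close> is orthogonal in
  \<open>L\<^sup>2(\<mu>)\<close> to every feature \<open>\<sigma>(x\<^sup>T\<Theta>)\<close> at the atoms of the stationary measure, hence to
  every kernel section, every eigenfunction of \<open>T\<^sup>\<star>T\<close> with positive eigenvalue and the
  whole RKHS; by Pythagoras \<open>f\<close> then minimises the empirical risk over the RKHS, provided it
  belongs to it. For membership, positive homogeneity of the ReLU makes \<open>w\<^sub>j\<^sup>2 - |u\<^sub>j|\<^sup>2\<close>
  a conserved quantity, and a Gronwall argument shows that \<open>w\<^sub>j\<close> never changes sign; hence
  \<open>w\<^sub>j(\<infinity>) = s\<^sub>j |u\<^sub>j(\<infinity>)|\<close> and \<open>f\<close> is a combination of features carrying positive
  kernel weight. Such a combination is orthogonal to the null space of the (positive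
  semidefinite) Gram matrix, so it lies in the span of its eigenvectors with positive
  eigenvalue, which extend to eigenfunctions of \<open>T\<^sup>\<star>T\<close>.\<close>

section \<open>Spectral decomposition of symmetric matrices\<close>

text \<open>Vectors indexed by the \<open>n\<close> data points are functions \<open>nat \<Rightarrow> real\<close> vanishing from \<open>n\<close>
  on, with \<open>0\<close> the zero function; matrices are functions \<open>nat \<Rightarrow> nat \<Rightarrow> real\<close> read on
  \<open>{..<n}\<^sup>2\<close>.\<close>

definition inner_on :: "nat \<Rightarrow> (nat \<Rightarrow> real) \<Rightarrow> (nat \<Rightarrow> real) \<Rightarrow> real" where
  "inner_on n v w = (\<Sum>i<n. v i * w i)"

definition supported_below :: "nat \<Rightarrow> (nat \<Rightarrow> real) \<Rightarrow> bool" where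
  "supported_below n v \<longleftrightarrow> (\<forall>i\<ge>n. v i = 0)"

definition mat_vec :: "nat \<Rightarrow> (nat \<Rightarrow> nat \<Rightarrow> real) \<Rightarrow> (nat \<Rightarrow> real) \<Rightarrow> nat \<Rightarrow> real" where
  "mat_vec n G v = (\<lambda>i. if i < n then (\<Sum>k<n. G i k * v k) else 0)"

definition bilinear_form :: "nat \<Rightarrow> (nat \<Rightarrow> nat \<Rightarrow> real) \<Rightarrow> (nat \<Rightarrow> real) \<Rightarrow> (nat \<Rightarrow> real) \<Rightarrow> real" where
  "bilinear_form n G v w = (\<Sum>i<n. \<Sum>k<n. v i * G i k * w k)"

definition symmetric_mat :: "nat \<Rightarrow> (nat \<Rightarrow> nat \<Rightarrow> real) \<Rightarrow> bool" where
  "symmetric_mat n G \<longleftrightarrow> (\<forall>i<n. \<forall>k<n. G i k = G k i)"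

definition eigenvector :: "nat \<Rightarrow> (nat \<Rightarrow> nat \<Rightarrow> real) \<Rightarrow> (nat \<Rightarrow> real) \<Rightarrow> real \<Rightarrow> bool" where
  "eigenvector n G e l \<longleftrightarrow> supported_below n e \<and> e \<noteq> 0 \<and> mat_vec n G e = (\<lambda>i. l * e i)"

definition orthogonal_on :: "nat \<Rightarrow> (nat \<Rightarrow> real) set \<Rightarrow> bool" where
  "orthogonal_on n E \<longleftrightarrow> (\<forall>e\<in>E. \<forall>e'\<in>E. e \<noteq> e' \<longrightarrow> inner_on n e e' = 0)"

lemma inner_on_cong: "(\<And>i. i < n \<Longrightarrow> v i = v' i) \<Longrightarrow> inner_on n v w = inner_on n v' w"
  unfolding inner_on_def by simp

lemma inner_on_commute: "inner_on n v w = inner_on n w v"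
  unfolding inner_on_def by (simp add: mult.commute)

lemma inner_on_self_nonneg: "inner_on n v v \<ge> 0"
  unfolding inner_on_def by (intro sum_nonneg) auto

lemma inner_on_self_eq_0_iff:
  assumes "supported_below n v" shows "inner_on n v v = 0 \<longleftrightarrow> v = 0"
proof
  assume v0: "inner_on n v v = 0"
  have "\<forall>i\<in>{..<n}. v i * v i = 0"
    using v0 unfolding inner_on_def by (subst sum_nonneg_eq_0_iff[symmetric]) auto
  then show "v = 0"
    using assms unfolding supported_below_def by (auto simp: fun_eq_iff) (metis lessThan_iff not_le)
qed (simp add: inner_on_def)

lemma inner_on_self_pos: "supported_below n v \<Longrightarrow> v \<noteq> 0 \<Longrightarrow> inner_on n v v > 0"
  using inner_on_self_eq_0_iff inner_on_self_nonneg by (metis less_eq_real_def)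

lemma inner_on_mat_vec: "inner_on n z (mat_vec n G v) = bilinear_form n G z v"
  unfolding inner_on_def mat_vec_def bilinear_form_def by (simp add: sum_distrib_left mult.assoc)

lemma bilinear_form_commute: "symmetric_mat n G \<Longrightarrow> bilinear_form n G v w = bilinear_form n G w v"
  unfolding bilinear_form_def symmetric_mat_def
  by (subst sum.swap) (intro sum.cong refl, auto simp: mult.commute mult.left_commute)

lemma mat_vec_self_adjoint:
  "symmetric_mat n G \<Longrightarrow> inner_on n (mat_vec n G v) w = inner_on n v (mat_vec n G w)"
  by (metis bilinear_form_commute inner_on_commute inner_on_mat_vec)

lemma inner_on_add_left: "inner_on n (\<lambda>i. a * v i + b * w i) z = a * inner_on n v z + b * inner_on n w z"
  unfolding inner_on_def by (simp add: algebra_simps sum.distrib sum_distrib_left)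

lemma inner_on_add_right: "inner_on n z (\<lambda>i. a * v i + b * w i) = a * inner_on n z v + b * inner_on n z w"
  unfolding inner_on_def by (simp add: algebra_simps sum.distrib sum_distrib_left)

lemma inner_on_scale_left: "inner_on n (\<lambda>i. a * v i) z = a * inner_on n v z"
  unfolding inner_on_def by (simp add: algebra_simps sum_distrib_left)

lemma inner_on_scale_right: "inner_on n z (\<lambda>i. a * v i) = a * inner_on n z v"
  unfolding inner_on_def by (simp add: algebra_simps sum_distrib_left)

lemma inner_on_diff_sum_left:
  "inner_on n (\<lambda>k. v k - (\<Sum>e\<in>E. c e * e k)) w = inner_on n v w - (\<Sum>e\<in>E. c e * inner_on n e w)"
  unfolding inner_on_def
  by (simp add: algebra_simps sum_subtractf sum_distrib_left sum_distrib_right) (rule sum.swap)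

lemma bilinear_form_scale: "bilinear_form n G (\<lambda>i. c * z i) (\<lambda>i. c * z i) = c\<^sup>2 * bilinear_form n G z z"
  unfolding bilinear_form_def by (simp add: sum_distrib_left algebra_simps power2_eq_square)

lemma bilinear_form_shift:
  "bilinear_form n G (\<lambda>i. v i + t * z i) (\<lambda>i. v i + t * z i)
     = bilinear_form n G v v + t * bilinear_form n G v z + t * bilinear_form n G z v
       + t\<^sup>2 * bilinear_form n G z z"
  unfolding bilinear_form_def
  by (simp add: algebra_simps sum.distrib sum_distrib_left power2_eq_square)

lemma inner_on_shift:
  "inner_on n (\<lambda>i. v i + t * z i) (\<lambda>i. v i + t * z i)
     = inner_on n v v + 2 * t * inner_on n z v + t\<^sup>2 * inner_on n z z"
  unfolding inner_on_def by (simp add: algebra_simps sum.distrib sum_distrib_left power2_eq_square)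

lemma inner_on_normalize:
  assumes "supported_below n v" "v \<noteq> 0"
  shows "inner_on n (\<lambda>i. v i / sqrt (inner_on n v v)) (\<lambda>i. v i / sqrt (inner_on n v v)) = 1"
  using inner_on_self_pos[OF assms] inner_on_scale_left[of n "1 / sqrt (inner_on n v v)" v]
    inner_on_scale_right[of n _ "1 / sqrt (inner_on n v v)" v]
  by simp

lemma linear_le_quadratic_imp_zero:
  fixes a b :: real
  assumes "b \<ge> 0" "\<And>t. 2 * t * a \<le> t\<^sup>2 * b" shows "a = 0"
proof (rule ccontr)
  assume "a \<noteq> 0"
  define t where "t = a / (b + 1)"
  have "2 * t * a * (b + 1)\<^sup>2 \<le> t\<^sup>2 * b * (b + 1)\<^sup>2"
    using assms(2)[of t] by (rule mult_right_mono) simp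
  moreover have "2 * t * a * (b + 1)\<^sup>2 = 2 * a\<^sup>2 * (b + 1)"
    using assms(1) by (simp add: t_def power2_eq_square field_simps)
  moreover have "t\<^sup>2 * b * (b + 1)\<^sup>2 = a\<^sup>2 * b"
    using assms(1) by (simp add: t_def power_divide)
  ultimately have "2 * a\<^sup>2 * (b + 1) \<le> a\<^sup>2 * b" by simp
  moreover have "a\<^sup>2 > 0" using \<open>a \<noteq> 0\<close> by simp
  ultimately show False using assms(1)
    by (smt (verit) mult_le_cancel_left_pos mult.commute)
qed

lemma continuous_on_coordinate [continuous_intros]: "continuous_on S (\<lambda>v::nat \<Rightarrow> real. v i)"
  by (rule continuous_on_subset[OF continuous_on_product_coordinates]) auto

lemma compact_orthogonal_unit_sphere:
  "compact {v. supported_below n v \<and> (\<forall>e\<in>E. inner_on n v e = 0) \<and> inner_on n v v = 1}"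
    (is "compact ?S")
proof -
  define cube where "cube = PiE UNIV (\<lambda>i::nat. if i < n then {-1..1::real} else {0})"
  have "compactin (product_topology (\<lambda>i. euclidean) UNIV) cube"
    unfolding cube_def by (subst compactin_PiE) auto
  then have "compact cube" by (simp add: euclidean_product_topology)
  have bound: "\<bar>v i\<bar> \<le> 1" if "inner_on n v v = 1" "i < n" for v i
  proof -
    have "v i * v i \<le> inner_on n v v"
      unfolding inner_on_def using that(2) by (intro member_le_sum) auto
    then show ?thesis using that(1) abs_le_square_iff[of "v i" 1] by (simp add: power2_eq_square)
  qed
  have "?S = cube \<inter> ({v. inner_on n v v = 1} \<inter> (\<Inter>e\<in>E. {v. inner_on n v e = 0}))"
    unfolding cube_def supported_below_def using bound
    by (auto simp: PiE_iff abs_le_iff split: if_splits)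
  also have "compact \<dots>"
    by (intro compact_Int_closed \<open>compact cube\<close> closed_Int closed_INT ballI closed_Collect_eq)
       (auto simp: inner_on_def intro!: continuous_intros)
  finally show ?thesis .
qed

lemma rayleigh_maximiser_eigenvector:
  assumes sym: "symmetric_mat n G"
    and lin: "\<And>a b v z. v \<in> W \<Longrightarrow> z \<in> W \<Longrightarrow> (\<lambda>i. a * v i + b * z i) \<in> W"
    and invariant: "\<And>v. v \<in> W \<Longrightarrow> mat_vec n G v \<in> W"
    and supported: "\<And>v. v \<in> W \<Longrightarrow> supported_below n v"
    and vmW: "vm \<in> W" and vm1: "inner_on n vm vm = 1"
    and vmax: "\<And>v. v \<in> W \<Longrightarrow> inner_on n v v = 1 \<Longrightarrow> bilinear_form n G v v \<le> bilinear_form n G vm vm"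
  shows "mat_vec n G vm = (\<lambda>i. bilinear_form n G vm vm * vm i)"
proof -
  define lam where "lam = bilinear_form n G vm vm"
  have rayleigh: "bilinear_form n G z z \<le> lam * inner_on n z z" if "z \<in> W" for z
  proof (cases "z = 0")
    case False
    define c where "c = 1 / sqrt (inner_on n z z)"
    have p: "inner_on n z z > 0" using inner_on_self_pos[OF supported False] that .
    have "(\<lambda>i. c * z i + 0 * z i) \<in> W" using lin[OF that that] .
    moreover have "inner_on n (\<lambda>i. c * z i) (\<lambda>i. c * z i) = 1"
      using inner_on_normalize[OF supported[OF that] False] by (simp add: c_def)
    ultimately have "c\<^sup>2 * bilinear_form n G z z \<le> lam"
      using vmax[of "\<lambda>i. c * z i"] unfolding lam_def bilinear_form_scale[symmetric] by simp
    then show ?thesis using p by (simp add: c_def power_divide field_simps)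
  qed (simp add: bilinear_form_def inner_on_def)
  have first_variation: "bilinear_form n G z vm - lam * inner_on n z vm = 0" if "z \<in> W" for z
  proof (rule linear_le_quadratic_imp_zero)
    show "lam * inner_on n z z - bilinear_form n G z z \<ge> 0" using rayleigh[OF that] by simp
    fix t :: real
    have "(\<lambda>i. 1 * vm i + t * z i) \<in> W" by (rule lin[OF vmW that])
    then have "bilinear_form n G (\<lambda>i. vm i + t * z i) (\<lambda>i. vm i + t * z i)
           \<le> lam * inner_on n (\<lambda>i. vm i + t * z i) (\<lambda>i. vm i + t * z i)"
      using rayleigh by simp
    then show "2 * t * (bilinear_form n G z vm - lam * inner_on n z vm)
        \<le> t\<^sup>2 * (lam * inner_on n z z - bilinear_form n G z z)"
      using bilinear_form_commute[OF sym, of vm z]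
      by (simp add: bilinear_form_shift inner_on_shift vm1 lam_def algebra_simps)
  qed
  define d where "d = (\<lambda>i. 1 * mat_vec n G vm i + (- lam) * vm i)"
  have "d \<in> W" unfolding d_def by (rule lin[OF invariant[OF vmW] vmW])
  have "inner_on n d d = bilinear_form n G d vm - lam * inner_on n d vm"
    unfolding d_def by (simp only: inner_on_add_right inner_on_mat_vec)
  also have "\<dots> = 0" by (rule first_variation[OF \<open>d \<in> W\<close>])
  finally have "d = 0" using inner_on_self_eq_0_iff supported[OF \<open>d \<in> W\<close>] by blast
  then show ?thesis by (simp add: d_def lam_def fun_eq_iff)
qed

lemma symmetric_eigenvector_orthogonal:
  assumes sym: "symmetric_mat n G"
    and eig: "\<forall>e\<in>E. \<exists>l. eigenvector n G e l"
    and v0: "supported_below n v0" "\<forall>e\<in>E. inner_on n v0 e = 0" "v0 \<noteq> 0"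
  shows "\<exists>v l. eigenvector n G v l \<and> (\<forall>e\<in>E. inner_on n v e = 0)"
proof -
  define W where "W = {v. supported_below n v \<and> (\<forall>e\<in>E. inner_on n v e = 0)}"
  have lin: "(\<lambda>i. a * v i + b * z i) \<in> W" if "v \<in> W" "z \<in> W" for a b v z
    using that unfolding W_def supported_below_def by (auto simp: inner_on_add_left)
  have invariant: "mat_vec n G v \<in> W" if "v \<in> W" for v
  proof -
    have "inner_on n (mat_vec n G v) e = 0" if "e \<in> E" for e
    proof -
      obtain l where l: "mat_vec n G e = (\<lambda>i. l * e i)"
        using eig \<open>e \<in> E\<close> unfolding eigenvector_def by blast
      have "inner_on n (mat_vec n G v) e = l * inner_on n v e"
        by (simp add: mat_vec_self_adjoint[OF sym] l inner_on_scale_right)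
      then show ?thesis using \<open>v \<in> W\<close> \<open>e \<in> E\<close> unfolding W_def by auto
    qed
    then show ?thesis unfolding W_def supported_below_def mat_vec_def by auto
  qed
  define S where "S = W \<inter> {v. inner_on n v v = 1}"
  have "compact S"
    using compact_orthogonal_unit_sphere[of n E] unfolding S_def W_def by (simp add: Int_def conj_ac)
  moreover have "S \<noteq> {}"
  proof -
    have "(\<lambda>i. (1 / sqrt (inner_on n v0 v0)) * v0 i + 0 * v0 i) \<in> W"
      using v0 by (intro lin) (auto simp: W_def)
    then show ?thesis using inner_on_normalize[OF v0(1,3)] unfolding S_def by auto
  qed
  moreover have "continuous_on S (\<lambda>v. bilinear_form n G v v)"
    unfolding bilinear_form_def by (intro continuous_intros)
  ultimately obtain vm where "vm \<in> S" and vmax: "\<forall>v\<in>S. bilinear_form n G v v \<le> bilinear_form n G vm vm"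
    using continuous_attains_sup by blast
  then have vmW: "vm \<in> W" and vm1: "inner_on n vm vm = 1" unfolding S_def by auto
  moreover have "mat_vec n G vm = (\<lambda>i. bilinear_form n G vm vm * vm i)"
    using vmax by (intro rayleigh_maximiser_eigenvector[OF sym lin invariant _ vmW vm1])
       (auto simp: W_def S_def)
  moreover have "vm \<noteq> 0" using vm1 by (auto simp: inner_on_def)
  ultimately show ?thesis unfolding W_def eigenvector_def by blast
qed

lemma sum_fun_apply: "(\<Sum>a\<in>A. f a) (k::nat) = (\<Sum>a\<in>A. (f a k :: real))"
  by (induction A rule: infinite_finite_induct) auto

lemma card_orthogonal_le:
  assumes fin: "finite E" and nz: "\<forall>e\<in>E. supported_below n e \<and> e \<noteq> 0"
    and orth: "orthogonal_on n E"
  shows "card E \<le> n"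
proof -
  interpret V: vector_space "\<lambda>(c::real) (f::nat \<Rightarrow> real). (\<lambda>i. c * f i)"
    by unfold_locales (auto simp: algebra_simps fun_eq_iff)
  define basis :: "nat \<Rightarrow> nat \<Rightarrow> real" where "basis i = (\<lambda>k. if k = i then 1 else 0)" for i
  have span: "E \<subseteq> V.span (basis ` {..<n})"
  proof
    fix e assume "e \<in> E"
    then have eq: "e = (\<Sum>i<n. (\<lambda>k. e i * basis i k))"
      using nz unfolding supported_below_def basis_def
      by (auto simp: fun_eq_iff sum_fun_apply if_distrib cong: if_cong)
    show "e \<in> V.span (basis ` {..<n})"
      by (subst eq, intro V.span_sum V.span_scale V.span_base) auto
  qed
  have "\<not> V.dependent E"
    unfolding V.dependent_finite[OF fin]
  proof clarify
    fix c :: "(nat \<Rightarrow> real) \<Rightarrow> real" and e'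
    assume e': "e' \<in> E" and "c e' \<noteq> 0" and z: "(\<Sum>v\<in>E. (\<lambda>i. c v * v i)) = 0"
    have "0 = (\<Sum>k<n. (\<Sum>v\<in>E. c v * v k) * e' k)"
      using fun_cong[OF z] by (simp add: sum_fun_apply)
    also have "\<dots> = (\<Sum>v\<in>E. c v * inner_on n v e')"
      unfolding inner_on_def
      by (simp add: sum_distrib_left sum_distrib_right mult.assoc) (rule sum.swap)
    also have "\<dots> = c e' * inner_on n e' e'"
      using orth e' fin unfolding orthogonal_on_def by (subst sum.remove[of _ e']) (auto intro!: sum.neutral)
    finally show False using \<open>c e' \<noteq> 0\<close> inner_on_self_pos nz e' by fastforce
  qed
  then have "card E \<le> card (basis ` {..<n})"
    using V.independent_span_bound[OF _ _ span] by simp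
  also have "\<dots> \<le> n" using card_image_le[of "{..<n}" basis] by simp
  finally show ?thesis .
qed

lemma symmetric_orthogonal_eigenbasis:
  assumes sym: "symmetric_mat n G"
  obtains E where "finite E" and "\<forall>e\<in>E. \<exists>l. eigenvector n G e l" and "orthogonal_on n E"
    and "\<And>v k. supported_below n v \<Longrightarrow> v k = (\<Sum>e\<in>E. inner_on n v e / inner_on n e e * e k)"
proof -
  define family where
    "family E \<longleftrightarrow> finite E \<and> (\<forall>e\<in>E. \<exists>l. eigenvector n G e l) \<and> orthogonal_on n E" for E
  have "card E < Suc n" if "family E" for E
    using card_orthogonal_le[of E n] that unfolding family_def eigenvector_def by auto
  then obtain E where "family E" and maximal: "\<And>E'. family E' \<Longrightarrow> card E' \<le> card E"
    using ex_has_greatest_nat[of family "{}" card "Suc n"]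
    unfolding family_def orthogonal_on_def by auto
  then have fin: "finite E" and eig: "\<forall>e\<in>E. \<exists>l. eigenvector n G e l"
    and orth: "orthogonal_on n E"
    unfolding family_def by auto
  have pos: "inner_on n e e > 0" if "e \<in> E" for e
    using eig that inner_on_self_pos unfolding eigenvector_def by blast
  have "v k = (\<Sum>e\<in>E. inner_on n v e / inner_on n e e * e k)" if sv: "supported_below n v" for v k
  proof -
    define r where "r = (\<lambda>k. v k - (\<Sum>e\<in>E. inner_on n v e / inner_on n e e * e k))"
    have sr: "supported_below n r"
      using sv eig unfolding r_def supported_below_def eigenvector_def by (simp add: sum.neutral)
    have r_orth: "\<forall>e0\<in>E. inner_on n r e0 = 0"
    proof
      fix e0 assume e0: "e0 \<in> E"
      have "(\<Sum>e\<in>E. inner_on n v e / inner_on n e e * inner_on n e e0) = inner_on n v e0"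
        using fin e0 orth pos[OF e0] unfolding orthogonal_on_def
        by (subst sum.remove[of _ e0]) (auto intro!: sum.neutral)
      then show "inner_on n r e0 = 0"
        unfolding r_def inner_on_diff_sum_left by simp
    qed
    have "r = 0"
    proof (rule ccontr)
      assume "r \<noteq> 0"
      obtain e' l where e': "eigenvector n G e' l" "\<forall>e\<in>E. inner_on n e' e = 0"
        using symmetric_eigenvector_orthogonal[OF sym eig sr r_orth \<open>r \<noteq> 0\<close>] by blast
      have "e' \<notin> E"
        using e' inner_on_self_pos unfolding eigenvector_def by fastforce
      moreover have "family (insert e' E)"
        using fin eig orth e' inner_on_commute[of n]
        unfolding family_def orthogonal_on_def by (simp (no_asm_use)) metis
      ultimately show False using maximal[of "insert e' E"] fin by simp
    qed
    then show ?thesis unfolding r_def by (simp add: fun_eq_iff)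
  qed
  then show ?thesis using that fin eig orth by blast
qed


section \<open>Dynamics of a single neuron\<close>

lemma relu_nonneg: "relu z \<ge> 0"
  unfolding relu_def by auto

lemma relu_le_abs: "relu z \<le> \<bar>z\<bar>"
  unfolding relu_def by auto

lemma relu_scale: "c \<ge> 0 \<Longrightarrow> relu (c * z) = c * relu z"
  unfolding relu_def by (auto simp: max_def mult_le_0_iff zero_le_mult_iff)

text \<open>Positive homogeneity of the ReLU (\<open>\<sigma>(z) = \<sigma>'(z) z\<close>); with \<open>balance_conserved\<close> it
  makes \<open>w\<^sup>2 - |u|\<^sup>2\<close> a conserved quantity of each neuron.\<close>
lemma inner_flow_u_eq_flow_w: "u j \<bullet> flow_u n x y m w u j = w j * flow_w n x y m w u j"
  unfolding flow_u_def flow_w_def relu_def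
  by (simp add: inner_sum_right sum_distrib_left inner_commute algebra_simps cong: if_cong)
     (intro sum.cong refl, auto)

lemma abs_flow_w_le:
  assumes "norm (u j) = \<bar>w j\<bar>"
  shows "\<bar>flow_w n x y m w u j\<bar>
    \<le> (1 / real n) * (\<Sum>i<n. \<bar>y i - net m w u (x i)\<bar> * norm (x i)) * \<bar>w j\<bar>"
proof -
  have "\<bar>\<Sum>i<n. (y i - net m w u (x i)) * relu (x i \<bullet> u j)\<bar>
      \<le> (\<Sum>i<n. \<bar>y i - net m w u (x i)\<bar> * norm (x i) * norm (u j))"
  proof (rule order_trans[OF sum_abs sum_mono])
    fix i
    have "relu (x i \<bullet> u j) \<le> norm (x i) * norm (u j)"
      using relu_le_abs[of "x i \<bullet> u j"] Cauchy_Schwarz_ineq2[of "x i" "u j"] by linarith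
    then show "\<bar>(y i - net m w u (x i)) * relu (x i \<bullet> u j)\<bar>
        \<le> \<bar>y i - net m w u (x i)\<bar> * norm (x i) * norm (u j)"
      using relu_nonneg[of "x i \<bullet> u j"] by (simp add: abs_mult mult.assoc mult_left_mono)
  qed
  then show ?thesis
    unfolding flow_w_def assms sum_distrib_right[symmetric]
    by (simp add: abs_mult divide_simps mult.assoc)
qed

lemma has_real_derivative_inner_self:
  assumes "(f has_vector_derivative f') (at t within S)"
  shows "((\<lambda>t. f t \<bullet> f t) has_real_derivative 2 * (f t \<bullet> f')) (at t within S)"
proof -
  have "((\<lambda>t. f t \<bullet> f t) has_derivative (\<lambda>h. f t \<bullet> (h *\<^sub>R f') + (h *\<^sub>R f') \<bullet> f t)) (at t within S)"
    by (rule has_derivative_inner[OF assms[unfolded has_vector_derivative_def]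
          assms[unfolded has_vector_derivative_def]])
  moreover have "(\<lambda>h. f t \<bullet> (h *\<^sub>R f') + (h *\<^sub>R f') \<bullet> f t) = (*) (2 * (f t \<bullet> f'))"
    by (auto simp: inner_commute algebra_simps)
  ultimately show ?thesis by (simp add: has_field_derivative_def)
qed

lemma balance_conserved:
  fixes u :: "real \<Rightarrow> 'a::real_inner"
  assumes dw: "\<And>t. t \<ge> 0 \<Longrightarrow> (w has_real_derivative w' t) (at t within {0..})"
    and du: "\<And>t. t \<ge> 0 \<Longrightarrow> (u has_vector_derivative u' t) (at t within {0..})"
    and balanced: "\<And>t. u t \<bullet> u' t = w t * w' t"
    and "t \<ge> 0"
  shows "w t * w t - u t \<bullet> u t = w 0 * w 0 - u 0 \<bullet> u 0"
proof -
  have "((\<lambda>t. w t * w t - u t \<bullet> u t) has_real_derivative 0) (at t within {0..})"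
    if "t \<in> {0..}" for t
  proof -
    have "((\<lambda>t. w t * w t - u t \<bullet> u t) has_real_derivative
        w' t * w t + w' t * w t - 2 * (u t \<bullet> u' t)) (at t within {0..})"
      using that by (intro DERIV_diff DERIV_mult dw has_real_derivative_inner_self du) auto
    then show ?thesis by (simp add: balanced)
  qed
  then obtain c where "\<forall>t\<in>{0..}. w t * w t - u t \<bullet> u t = c"
    using has_field_derivative_zero_constant[OF convex_real_interval(1)] by blast
  then show ?thesis using \<open>t \<ge> 0\<close> by simp
qed

lemma gronwall_two_sided:
  fixes P P' :: "real \<Rightarrow> real"
  assumes "T \<ge> 0" "K \<ge> 0"
    and cont: "continuous_on {0..T} P"
    and deriv: "\<And>\<tau>. 0 < \<tau> \<Longrightarrow> \<tau> < T \<Longrightarrow> (P has_real_derivative P' \<tau>) (at \<tau>)"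
    and bound: "\<And>\<tau>. 0 < \<tau> \<Longrightarrow> \<tau> < T \<Longrightarrow> \<bar>P' \<tau>\<bar> \<le> K * P \<tau>"
  shows "P 0 \<le> P T * exp (K * T)" and "P T \<le> P 0 * exp (K * T)"
proof -
  have monotone: "\<sigma> * P 0 \<le> \<sigma> * P T * exp (c * T)"
    if c: "\<And>\<tau>. 0 < \<tau> \<Longrightarrow> \<tau> < T \<Longrightarrow> \<sigma> * (P' \<tau> + c * P \<tau>) \<ge> 0" for \<sigma> c
  proof -
    have "\<sigma> * P 0 * exp (c * 0) \<le> \<sigma> * P T * exp (c * T)"
    proof (rule DERIV_nonneg_imp_increasing_open[OF \<open>T \<ge> 0\<close>])
      fix \<tau> assume t: "0 < \<tau>" "\<tau> < T"
      have "((\<lambda>\<tau>. \<sigma> * P \<tau> * exp (c * \<tau>)) has_real_derivative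
          exp (c * \<tau>) * (\<sigma> * (P' \<tau> + c * P \<tau>))) (at \<tau>)"
        using deriv[OF t] by (auto intro!: derivative_eq_intros simp: algebra_simps)
      then show "\<exists>y. ((\<lambda>\<tau>. \<sigma> * P \<tau> * exp (c * \<tau>)) has_real_derivative y) (at \<tau>) \<and> 0 \<le> y"
        using c[OF t] by auto
    qed (intro continuous_intros cont)
    then show ?thesis by simp
  qed
  show "P 0 \<le> P T * exp (K * T)"
    using monotone[of 1 K] bound by (fastforce simp: abs_le_iff)
  have "- P 0 \<le> - P T * exp (- K * T)"
    using monotone[of "-1" "- K"] bound by (fastforce simp: abs_le_iff)
  then have "P T * exp (- K * T) * exp (K * T) \<le> P 0 * exp (K * T)" by simp
  then show "P T \<le> P 0 * exp (K * T)" by (simp add: mult.assoc exp_add[symmetric])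
qed

text \<open>Since \<open>|(w\<^sup>2)'| \<le> 2 g w\<^sup>2\<close>, Gronwall bounds \<open>w(t)\<^sup>2\<close> above and below by multiples
  of \<open>w(0)\<^sup>2\<close>.\<close>
lemma vanishes_iff_of_deriv_bound:
  fixes w g D :: "real \<Rightarrow> real"
  assumes cw: "continuous_on {0..} w" and cg: "continuous_on {0..} g"
    and dw: "\<And>t. t > 0 \<Longrightarrow> (w has_real_derivative D t) (at t)"
    and bound: "\<And>t. t > 0 \<Longrightarrow> \<bar>D t\<bar> \<le> g t * \<bar>w t\<bar>"
    and "t \<ge> 0"
  shows "w t = 0 \<longleftrightarrow> w 0 = 0"
proof -
  have "continuous_on {0..t} g" by (rule continuous_on_subset[OF cg]) auto
  then obtain tm where tm: "\<forall>\<tau>\<in>{0..t}. g \<tau> \<le> g tm"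
    using continuous_attains_sup[of "{0..t}" g] \<open>t \<ge> 0\<close> by auto
  define K where "K = 2 * \<bar>g tm\<bar>"
  have bound_sq: "\<bar>2 * D \<tau> * w \<tau>\<bar> \<le> K * (w \<tau> * w \<tau>)" if "0 < \<tau>" "\<tau> < t" for \<tau>
  proof -
    have "\<bar>2 * D \<tau> * w \<tau>\<bar> \<le> 2 * (g \<tau> * \<bar>w \<tau>\<bar>) * \<bar>w \<tau>\<bar>"
      using bound[OF that(1)] by (simp add: abs_mult mult_right_mono)
    also have "\<dots> \<le> K * (w \<tau> * w \<tau>)"
    proof -
      have "g \<tau> \<le> g tm" using tm that by simp
      then have "g \<tau> \<le> \<bar>g tm\<bar>" by linarith
      then show ?thesis unfolding K_def
        by (simp add: abs_mult_self_eq mult.assoc mult_right_mono)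
    qed
    finally show ?thesis .
  qed
  have deriv_sq: "((\<lambda>t. w t * w t) has_real_derivative 2 * D \<tau> * w \<tau>) (at \<tau>)" if "\<tau> > 0" for \<tau>
    using DERIV_mult[OF dw dw, OF that that] by (simp add: algebra_simps)
  have cont_sq: "continuous_on {0..t} (\<lambda>t. w t * w t)"
    by (intro continuous_intros continuous_on_subset[OF cw]) auto
  have "K \<ge> 0" unfolding K_def by simp
  note gronwall = gronwall_two_sided[OF \<open>t \<ge> 0\<close> this cont_sq deriv_sq bound_sq]
  show ?thesis
    using gronwall by (metis exp_gt_zero mult_eq_0_iff mult_le_0_iff not_square_less_zero order_antisym)
qed

lemma sgn_preserved_of_deriv_bound:
  fixes w g D :: "real \<Rightarrow> real"
  assumes cw: "continuous_on {0..} w" and cg: "continuous_on {0..} g"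
    and dw: "\<And>t. t > 0 \<Longrightarrow> (w has_real_derivative D t) (at t)"
    and bound: "\<And>t. t > 0 \<Longrightarrow> \<bar>D t\<bar> \<le> g t * \<bar>w t\<bar>"
    and "T \<ge> 0"
  shows "sgn (w T) = sgn (w 0)"
proof (rule ccontr)
  have vanish_iff: "w t = 0 \<longleftrightarrow> w 0 = 0" if "t \<ge> 0" for t
    using cw cg dw bound that by (rule vanishes_iff_of_deriv_bound)
  assume differ: "sgn (w T) \<noteq> sgn (w 0)"
  then have "w 0 * w T < 0"
    using vanish_iff[OF \<open>T \<ge> 0\<close>] by (auto simp: sgn_if mult_less_0_iff split: if_splits)
  moreover have "continuous_on {0..T} (\<lambda>t. w 0 * w t)"
    by (intro continuous_intros continuous_on_subset[OF cw]) auto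
  ultimately obtain t where "0 \<le> t" "t \<le> T" "w 0 * w t = 0"
    using IVT2'[of "\<lambda>t. w 0 * w t" T 0 0] \<open>T \<ge> 0\<close> by auto
  then show False using vanish_iff[of t] vanish_iff[OF \<open>T \<ge> 0\<close>] differ by (metis mult_eq_0_iff)
qed

lemma neuron_balanced_sign_kept:
  fixes x :: "nat \<Rightarrow> 'a::real_inner" and w :: "real \<Rightarrow> nat \<Rightarrow> real" and u :: "real \<Rightarrow> nat \<Rightarrow> 'a"
  assumes "j < m" and sign: "s = 1 \<or> s = -1"
    and init_u: "u 0 j = (1 / sqrt (real m)) *\<^sub>R \<Theta>"
    and init_w: "w 0 j = s * norm \<Theta> / sqrt (real m)"
    and flow_w: "\<forall>j<m. \<forall>t\<ge>0. ((\<lambda>t. w t j) has_real_derivative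
                   flow_w n x y m (w t) (u t) j) (at t within {0..})"
    and flow_u: "\<forall>j<m. \<forall>t\<ge>0. ((\<lambda>t. u t j) has_vector_derivative
                   flow_u n x y m (w t) (u t) j) (at t within {0..})"
    and "t \<ge> 0"
  shows "w t j * w t j = u t j \<bullet> u t j" and "s * w t j \<ge> 0"
proof -
  have cw: "continuous_on {0..} (\<lambda>t. w t k)" if "k < m" for k
    using flow_w that by (intro DERIV_continuous_on) auto
  have cu: "continuous_on {0..} (\<lambda>t. u t k)" if "k < m" for k
    using flow_u that unfolding continuous_on_eq_continuous_within
    by (auto intro: has_vector_derivative_continuous)
  have balanced: "w t j * w t j = u t j \<bullet> u t j" if "t \<ge> 0" for t
  proof -
    have "w 0 j * w 0 j = u 0 j \<bullet> u 0 j"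
      using sign \<open>j < m\<close> unfolding init_u init_w
      by (auto simp: power2_norm_eq_inner[symmetric] power2_eq_square field_simps)
    then show ?thesis
      using balance_conserved[of "\<lambda>t. w t j" "\<lambda>t. flow_w n x y m (w t) (u t) j"
          "\<lambda>t. u t j" "\<lambda>t. flow_u n x y m (w t) (u t) j", OF _ _ inner_flow_u_eq_flow_w that]
        flow_w flow_u \<open>j < m\<close> by auto
  qed
  then show "w t j * w t j = u t j \<bullet> u t j" using \<open>t \<ge> 0\<close> .
  define g where
    "g t = (1 / real n) * (\<Sum>i<n. \<bar>y i - net m (w t) (u t) (x i)\<bar> * norm (x i))" for t
  have "continuous_on {0..} g"
    unfolding g_def net_def relu_def by (intro continuous_intros cw cu) auto
  moreover have "((\<lambda>t. w t j) has_real_derivative flow_w n x y m (w t) (u t) j) (at t)" if "t > 0" for t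
  proof -
    have "at t within {0..} = at t" using that by (intro at_within_interior) auto
    then show ?thesis using flow_w \<open>j < m\<close> that by (metis less_imp_le)
  qed
  moreover have "\<bar>flow_w n x y m (w t) (u t) j\<bar> \<le> g t * \<bar>w t j\<bar>" if "t > 0" for t
  proof -
    have "norm (u t j) = \<bar>w t j\<bar>"
      using balanced[of t] that by (metis less_imp_le norm_eq_sqrt_inner real_sqrt_abs2)
    then show ?thesis unfolding g_def by (rule abs_flow_w_le)
  qed
  ultimately have "sgn (w t j) = sgn (w 0 j)"
    by (rule sgn_preserved_of_deriv_bound[OF cw[OF \<open>j < m\<close>]]) (use \<open>t \<ge> 0\<close> in auto)
  moreover have "s * w 0 j \<ge> 0"
    using sign unfolding init_w by auto
  ultimately show "s * w t j \<ge> 0" by (metis sgn_mult zero_le_sgn_iff)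
qed

lemma neuron_limit_eq_sign_norm:
  fixes x :: "nat \<Rightarrow> 'a::real_inner" and w :: "real \<Rightarrow> nat \<Rightarrow> real" and u :: "real \<Rightarrow> nat \<Rightarrow> 'a"
  assumes "j < m" and sign: "s = 1 \<or> s = -1"
    and init_u: "u 0 j = (1 / sqrt (real m)) *\<^sub>R \<Theta>"
    and init_w: "w 0 j = s * norm \<Theta> / sqrt (real m)"
    and flow_w: "\<forall>j<m. \<forall>t\<ge>0. ((\<lambda>t. w t j) has_real_derivative
                   flow_w n x y m (w t) (u t) j) (at t within {0..})"
    and flow_u: "\<forall>j<m. \<forall>t\<ge>0. ((\<lambda>t. u t j) has_vector_derivative
                   flow_u n x y m (w t) (u t) j) (at t within {0..})"
    and lim_w: "((\<lambda>t. w t j) \<longlongrightarrow> w_inf) at_top"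
    and lim_u: "((\<lambda>t. u t j) \<longlongrightarrow> u_inf) at_top"
  shows "w_inf = s * norm u_inf"
proof -
  note neuron = neuron_balanced_sign_kept[OF assms(1-6)]
  have "s * w_inf \<ge> 0"
    using neuron(2)
    by (intro tendsto_lowerbound[OF tendsto_mult[OF tendsto_const lim_w]] eventually_at_top_linorderI[of 0])
       auto
  moreover have "w_inf * w_inf = u_inf \<bullet> u_inf"
  proof (rule tendsto_unique[OF trivial_limit_at_top_linorder])
    show "((\<lambda>t. w t j * w t j) \<longlongrightarrow> w_inf * w_inf) at_top"
      by (intro tendsto_intros lim_w)
    have "((\<lambda>t. u t j \<bullet> u t j) \<longlongrightarrow> u_inf \<bullet> u_inf) at_top"
      by (intro tendsto_intros lim_u)
    moreover have "\<forall>\<^sub>F t in at_top. u t j \<bullet> u t j = w t j * w t j"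
      using neuron(1) by (intro eventually_at_top_linorderI[of 0]) auto
    ultimately show "((\<lambda>t. w t j * w t j) \<longlongrightarrow> u_inf \<bullet> u_inf) at_top"
      by (rule Lim_transform_eventually)
  qed
  then have "norm u_inf = \<bar>w_inf\<bar>" by (metis norm_eq_sqrt_inner real_sqrt_abs2)
  ultimately show ?thesis using sign by auto
qed


section \<open>The kernel and its RKHS\<close>

lemma sum_image_regroup:
  fixes h :: "'b \<Rightarrow> real" and a :: "'c \<Rightarrow> real"
  assumes "finite S"
  shows "(\<Sum>j\<in>S. h (t j) * a j) = (\<Sum>q\<in>t ` S. h q * (\<Sum>j\<in>{j\<in>S. t j = q}. a j))"
proof -
  have "(\<Sum>j\<in>S. h (t j) * a j) = (\<Sum>q\<in>t ` S. \<Sum>j\<in>{j\<in>S. t j = q}. h (t j) * a j)"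
    by (rule sum.image_gen[OF assms])
  also have "\<dots> = (\<Sum>q\<in>t ` S. h q * (\<Sum>j\<in>{j\<in>S. t j = q}. a j))"
    by (intro sum.cong refl) (simp add: sum_distrib_left)
  finally show ?thesis .
qed

lemma kernelH_commute: "kernelH m s th z z' = kernelH m s th z' z"
  unfolding kernelH_def by (simp add: algebra_simps)

lemma sum_kernelH_eq_0:
  assumes "\<forall>j<m. (\<Sum>i<n. r i * relu (x i \<bullet> th j)) = 0"
  shows "(\<Sum>i<n. r i * kernelH m s th (x i) z) = 0"
proof -
  have "(\<Sum>i<n. r i * kernelH m s th (x i) z)
      = (\<Sum>q\<in>th ` {..<m}. \<bar>atom_mass m s th q\<bar> * (norm q)\<^sup>2 * relu (z \<bullet> q)
           * (\<Sum>i<n. r i * relu (x i \<bullet> q)))"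
    unfolding kernelH_def sum_distrib_left by (subst sum.swap) (simp add: mult_ac)
  also have "\<dots> = 0" using assms by (auto intro!: sum.neutral)
  finally show ?thesis .
qed

text \<open>An eigenfunction with nonzero eigenvalue is determined on the data by the kernel, so
  a residual orthogonal to every kernel section is orthogonal to the whole RKHS.\<close>
lemma rkhs_orthogonal:
  assumes orth: "\<forall>j<m. (\<Sum>i<n. r i * relu (x i \<bullet> th j)) = 0"
    and "g \<in> rkhs n x (TstarT n x m s th)"
  shows "(\<Sum>i<n. r i * g (x i)) = 0"
proof -
  have eigen_orth: "(\<Sum>i<n. r i * e (x i)) = 0"
    if "is_eigenfun n x (TstarT n x m s th) e l" "l > 0" for e l
  proof -
    have e_data: "e (x i) = (1 / (l * real n)) * (\<Sum>k<n. kernelH m s th (x i) (x k) * e (x k))"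
      if "i < n" for i
    proof -
      have "l * e (x i) = (1 / real n) * (\<Sum>k<n. kernelH m s th (x i) (x k) * e (x k))"
        using \<open>is_eigenfun n x _ e l\<close> \<open>i < n\<close> unfolding is_eigenfun_def TstarT_def by auto
      moreover have "real n > 0" using \<open>i < n\<close> by simp
      ultimately show ?thesis using \<open>l > 0\<close> by (simp add: field_simps)
    qed
    have "(\<Sum>i<n. r i * e (x i))
        = (\<Sum>i<n. r i * ((1 / (l * real n)) * (\<Sum>k<n. kernelH m s th (x i) (x k) * e (x k))))"
      using e_data by (intro sum.cong) auto
    also have "\<dots> = (1 / (l * real n)) * (\<Sum>k<n. e (x k) * (\<Sum>i<n. r i * kernelH m s th (x i) (x k)))"
      by (simp add: sum_distrib_left mult_ac) (subst sum.swap, simp add: mult_ac)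
    also have "\<dots> = 0" using sum_kernelH_eq_0[OF orth] by simp
    finally show ?thesis .
  qed
  obtain F c where "finite F" and F: "F \<subseteq> {e. \<exists>l>0. is_eigenfun n x (TstarT n x m s th) e l}"
    and g: "\<forall>i<n. g (x i) = (\<Sum>e\<in>F. c e * e (x i))"
    using assms(2) unfolding rkhs_def by blast
  have "(\<Sum>i<n. r i * g (x i)) = (\<Sum>e\<in>F. c e * (\<Sum>i<n. r i * e (x i)))"
    using g by (simp add: sum_distrib_left mult_ac) (subst sum.swap, simp)
  also have "\<dots> = 0" using F eigen_orth by (auto intro!: sum.neutral)
  finally show ?thesis .
qed

lemma emp_risk_le_of_orthogonal_residual:
  assumes "(\<Sum>i<n. (y i - f (x i)) * (f (x i) - g (x i))) = 0"
  shows "emp_risk n x y f \<le> emp_risk n x y g"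
proof -
  have "(\<Sum>i<n. (y i - g (x i))\<^sup>2)
      = (\<Sum>i<n. (y i - f (x i))\<^sup>2) + 2 * (\<Sum>i<n. (y i - f (x i)) * (f (x i) - g (x i)))
        + (\<Sum>i<n. (f (x i) - g (x i))\<^sup>2)"
    by (simp add: sum.distrib[symmetric] sum_distrib_left power2_eq_square algebra_simps)
  then have "(\<Sum>i<n. (y i - f (x i))\<^sup>2) \<le> (\<Sum>i<n. (y i - g (x i))\<^sup>2)"
    using assms by (simp add: sum_nonneg)
  then show ?thesis unfolding emp_risk_def by (simp add: divide_right_mono)
qed

definition gram :: "nat \<Rightarrow> (nat \<Rightarrow> 'a::real_inner) \<Rightarrow> nat \<Rightarrow> (nat \<Rightarrow> real) \<Rightarrow> (nat \<Rightarrow> 'a)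
    \<Rightarrow> nat \<Rightarrow> nat \<Rightarrow> real" where
  "gram n x m s th i k = (1 / real n) * kernelH m s th (x i) (x k)"

text \<open>Nystrom extension of a Gram-matrix eigenvector to an eigenfunction of \<open>T\<^sup>\<star>T\<close>.\<close>
definition nystrom_ext :: "nat \<Rightarrow> (nat \<Rightarrow> 'a::real_inner) \<Rightarrow> nat \<Rightarrow> (nat \<Rightarrow> real) \<Rightarrow> (nat \<Rightarrow> 'a)
    \<Rightarrow> real \<Rightarrow> (nat \<Rightarrow> real) \<Rightarrow> 'a \<Rightarrow> real" where
  "nystrom_ext n x m s th l e z = (1 / (l * real n)) * (\<Sum>i<n. kernelH m s th z (x i) * e i)"

lemma symmetric_gram: "symmetric_mat n (gram n x m s th)"
  unfolding symmetric_mat_def gram_def by (simp add: kernelH_commute)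

lemma bilinear_form_gram:
  "bilinear_form n (gram n x m s th) e e
     = (1 / real n) * (\<Sum>q\<in>th ` {..<m}. \<bar>atom_mass m s th q\<bar> * (norm q)\<^sup>2
                         * (\<Sum>i<n. e i * relu (x i \<bullet> q))\<^sup>2)"
proof -
  have "bilinear_form n (gram n x m s th) e e
      = (1 / real n) * (\<Sum>i<n. \<Sum>k<n. \<Sum>q\<in>th ` {..<m}. \<bar>atom_mass m s th q\<bar> * (norm q)\<^sup>2
           * (e i * relu (x i \<bullet> q)) * (e k * relu (x k \<bullet> q)))"
    unfolding bilinear_form_def gram_def kernelH_def
    by (simp add: sum_distrib_left sum_distrib_right mult_ac)
  also have "\<dots> = (1 / real n) * (\<Sum>q\<in>th ` {..<m}. \<bar>atom_mass m s th q\<bar> * (norm q)\<^sup>2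
                         * (\<Sum>i<n. e i * relu (x i \<bullet> q))\<^sup>2)"
    by (subst sum.swap, subst (2) sum.swap)
       (simp add: power2_eq_square sum_product sum_distrib_left mult_ac)
  finally show ?thesis .
qed

text \<open>The Gram matrix is positive semidefinite, so such an \<open>e\<close> lies in its null space.\<close>
lemma gram_eigenvector_nonpos_orthogonal:
  assumes eig: "eigenvector n (gram n x m s th) e l" and "l \<le> 0"
    and support: "\<forall>q\<in>th ` {..<m}. b q \<noteq> 0 \<longrightarrow> atom_mass m s th q \<noteq> 0 \<and> q \<noteq> 0"
  shows "inner_on n (\<lambda>k. \<Sum>q\<in>th ` {..<m}. b q * relu (x k \<bullet> q)) e = 0"
proof -
  define P where "P q = (\<Sum>i<n. e i * relu (x i \<bullet> q))" for q
  define A where "A = th ` {..<m}"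
  have "bilinear_form n (gram n x m s th) e e = l * inner_on n e e"
    using eig inner_on_mat_vec[of n e "gram n x m s th" e]
    unfolding eigenvector_def by (simp add: inner_on_scale_right)
  also have "\<dots> \<le> 0"
    using \<open>l \<le> 0\<close> inner_on_self_nonneg[of n e] by (simp add: mult_nonpos_nonneg)
  finally have "(\<Sum>q\<in>A. \<bar>atom_mass m s th q\<bar> * (norm q)\<^sup>2 * (P q)\<^sup>2) \<le> 0"
    unfolding bilinear_form_gram P_def A_def
    by (cases "n = 0") (auto simp: bilinear_form_def divide_le_0_iff)
  moreover have "(\<Sum>q\<in>A. \<bar>atom_mass m s th q\<bar> * (norm q)\<^sup>2 * (P q)\<^sup>2) \<ge> 0"
    by (intro sum_nonneg) simp
  ultimately have "\<forall>q\<in>A. \<bar>atom_mass m s th q\<bar> * (norm q)\<^sup>2 * (P q)\<^sup>2 = 0"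
    by (subst sum_nonneg_eq_0_iff[symmetric]) (auto simp: A_def)
  then have "\<forall>q\<in>A. b q * P q = 0"
    using support unfolding A_def by auto
  moreover have "inner_on n (\<lambda>k. \<Sum>q\<in>A. b q * relu (x k \<bullet> q)) e = (\<Sum>q\<in>A. b q * P q)"
    unfolding inner_on_def P_def sum_distrib_right sum_distrib_left
    by (subst sum.swap) (simp add: mult_ac)
  ultimately show ?thesis unfolding A_def[symmetric] by (simp add: sum.neutral)
qed

lemma nystrom_ext_data:
  assumes "eigenvector n (gram n x m s th) e l" "l \<noteq> 0" "k < n"
  shows "nystrom_ext n x m s th l e (x k) = e k"
proof -
  have "mat_vec n (gram n x m s th) e k = l * e k"
    using assms(1) unfolding eigenvector_def by simp
  then have "(1 / real n) * (\<Sum>i<n. kernelH m s th (x k) (x i) * e i) = l * e k"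
    using \<open>k < n\<close> unfolding mat_vec_def gram_def by (simp add: sum_distrib_left mult_ac)
  moreover have "real n > 0" using \<open>k < n\<close> by simp
  ultimately show ?thesis
    unfolding nystrom_ext_def using \<open>l \<noteq> 0\<close> by (simp add: field_simps)
qed

lemma nystrom_ext_eigenfun:
  assumes eig: "eigenvector n (gram n x m s th) e l" and "l \<noteq> 0"
  shows "is_eigenfun n x (TstarT n x m s th) (nystrom_ext n x m s th l e) l"
  unfolding is_eigenfun_def
proof (intro conjI allI impI)
  obtain i where "e i \<noteq> 0" using eig unfolding eigenvector_def by (auto simp: fun_eq_iff)
  moreover have "i < n"
    using eig \<open>e i \<noteq> 0\<close> unfolding eigenvector_def supported_below_def by (meson not_le)
  ultimately show "\<exists>i<n. nystrom_ext n x m s th l e (x i) \<noteq> 0"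
    using nystrom_ext_data[OF assms] by auto
next
  fix k assume "k < n"
  have "TstarT n x m s th (nystrom_ext n x m s th l e) (x k) = mat_vec n (gram n x m s th) e k"
    unfolding TstarT_def mat_vec_def gram_def using \<open>k < n\<close> nystrom_ext_data[OF assms]
    by (simp add: sum_distrib_left mult_ac)
  also have "\<dots> = l * e k" using eig unfolding eigenvector_def by simp
  finally show "TstarT n x m s th (nystrom_ext n x m s th l e) (x k)
      = l * nystrom_ext n x m s th l e (x k)"
    using nystrom_ext_data[OF assms \<open>k < n\<close>] by simp
qed

text \<open>Expand the data vector of \<open>f\<close> in an orthogonal eigenbasis of the Gram matrix: the
  components along eigenvalues \<open>\<le> 0\<close> vanish, and the remaining eigenvectors extend to
  eigenfunctions of \<open>T\<^sup>\<star>T\<close> with the same values on the data.\<close>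
lemma mem_rkhs_of_feature_combination:
  assumes support: "\<forall>q\<in>th ` {..<m}. b q \<noteq> 0 \<longrightarrow> atom_mass m s th q \<noteq> 0 \<and> q \<noteq> 0"
    and f: "\<forall>k<n. f (x k) = (\<Sum>q\<in>th ` {..<m}. b q * relu (x k \<bullet> q))"
  shows "f \<in> rkhs n x (TstarT n x m s th)"
proof -
  define G where "G = gram n x m s th"
  obtain E where "finite E" and eig: "\<forall>e\<in>E. \<exists>l. eigenvector n G e l"
    and expand: "\<And>v k. supported_below n v \<Longrightarrow> v k = (\<Sum>e\<in>E. inner_on n v e / inner_on n e e * e k)"
    by (rule symmetric_orthogonal_eigenbasis[OF symmetric_gram[of n x m s th, folded G_def]]) blast
  obtain lam where lam: "\<forall>e\<in>E. eigenvector n G e (lam e)"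
    using bchoice[OF eig] by blast
  define fv where "fv k = (if k < n then f (x k) else 0)" for k
  define c where "c e = inner_on n fv e / inner_on n e e" for e
  define Ep where "Ep = {e\<in>E. lam e > 0}"
  define ext where "ext e = nystrom_ext n x m s th (lam e) e" for e
  have fv_orth: "inner_on n fv e = 0" if "e \<in> E - Ep" for e
  proof -
    have "inner_on n fv e = inner_on n (\<lambda>k. \<Sum>q\<in>th ` {..<m}. b q * relu (x k \<bullet> q)) e"
      using f unfolding fv_def by (intro inner_on_cong) auto
    also have "\<dots> = 0"
      using that lam support unfolding Ep_def G_def
      by (intro gram_eigenvector_nonpos_orthogonal) auto
    finally show ?thesis .
  qed
  define d where "d h = (\<Sum>e\<in>{e\<in>Ep. ext e = h}. c e)" for h
  have "f (x k) = (\<Sum>h\<in>ext ` Ep. d h * h (x k))" if "k < n" for k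
  proof -
    have "f (x k) = (\<Sum>e\<in>E. c e * e k)"
      using expand[of fv k] \<open>k < n\<close> unfolding fv_def c_def supported_below_def by simp
    also have "\<dots> = (\<Sum>e\<in>Ep. c e * e k)"
      using \<open>finite E\<close> fv_orth unfolding c_def Ep_def by (intro sum.mono_neutral_right) auto
    also have "\<dots> = (\<Sum>e\<in>Ep. ext e (x k) * c e)"
    proof (intro sum.cong refl)
      fix e assume "e \<in> Ep"
      then show "c e * e k = ext e (x k) * c e"
        using nystrom_ext_data[of n x m s th e "lam e" k] lam \<open>k < n\<close>
        unfolding Ep_def ext_def G_def by auto
    qed
    also have "\<dots> = (\<Sum>h\<in>ext ` Ep. h (x k) * d h)"
      using \<open>finite E\<close> unfolding Ep_def d_def by (intro sum_image_regroup) auto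
    finally show ?thesis by (simp add: mult.commute)
  qed
  moreover have "ext ` Ep \<subseteq> {e. \<exists>l>0. is_eigenfun n x (TstarT n x m s th) e l}"
  proof
    fix h assume "h \<in> ext ` Ep"
    then obtain e where "e \<in> E" "lam e > 0" "h = ext e" unfolding Ep_def by blast
    then show "h \<in> {e. \<exists>l>0. is_eigenfun n x (TstarT n x m s th) e l}"
      using nystrom_ext_eigenfun[of n x m s th e "lam e"] lam unfolding ext_def G_def by auto
  qed
  moreover have "finite (ext ` Ep)" using \<open>finite E\<close> unfolding Ep_def by simp
  ultimately show ?thesis unfolding rkhs_def by blast
qed

lemma net_eq_feature_combination:
  assumes "m \<ge> 1" and w_eq: "\<forall>j<m. w j = s j * norm (u j)"
  defines "th \<equiv> \<lambda>j. sqrt (real m) *\<^sub>R u j"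
  shows "net m w u z = (\<Sum>q\<in>th ` {..<m}. norm q * atom_mass m s th q * relu (z \<bullet> q))"
proof -
  have sqrt_m: "sqrt (real m) > 0" "sqrt (real m) * sqrt (real m) = real m" using \<open>m \<ge> 1\<close> by auto
  have "w j * relu (z \<bullet> u j) = norm (th j) * relu (z \<bullet> th j) * (s j / real m)" if "j < m" for j
  proof -
    have "norm (th j) * relu (z \<bullet> th j) = real m * (norm (u j) * relu (z \<bullet> u j))"
      unfolding th_def using sqrt_m by (simp add: relu_scale mult_ac)
    then show ?thesis using w_eq that \<open>m \<ge> 1\<close> by simp
  qed
  then have "net m w u z = (\<Sum>j<m. norm (th j) * relu (z \<bullet> th j) * (s j / real m))"
    unfolding net_def by simp
  also have "\<dots> = (\<Sum>q\<in>th ` {..<m}. norm q * relu (z \<bullet> q) * (\<Sum>j\<in>{j\<in>{..<m}. th j = q}. s j / real m))"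
    by (rule sum_image_regroup) simp
  also have "\<dots> = (\<Sum>q\<in>th ` {..<m}. norm q * atom_mass m s th q * relu (z \<bullet> q))"
    unfolding atom_mass_def by (simp add: sum_divide_distrib[symmetric] conj_commute mult_ac)
  finally show ?thesis .
qed

lemma stationary_residual_orthogonal:
  assumes "n \<ge> 1" "flow_w n x y m w u j = 0" "c \<ge> 0"
  shows "(\<Sum>i<n. (y i - net m w u (x i)) * relu (x i \<bullet> (c *\<^sub>R u j))) = 0"
  using assms unfolding flow_w_def by (simp add: relu_scale sum_distrib_left[symmetric] mult_ac)

theorem corollary1:
  fixes x :: "nat \<Rightarrow> real ^ 'd" and y :: "nat \<Rightarrow> real" and n m :: nat
    and \<Theta> :: "nat \<Rightarrow> real ^ 'd" and s :: "nat \<Rightarrow> real"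
    and w :: "real \<Rightarrow> nat \<Rightarrow> real" and u :: "real \<Rightarrow> nat \<Rightarrow> real ^ 'd"
    and w_inf :: "nat \<Rightarrow> real" and u_inf :: "nat \<Rightarrow> real ^ 'd"
  assumes "n \<ge> 1" and "m \<ge> 1"
    and sgn: "\<forall>j<m. s j = 1 \<or> s j = -1"
    and init_u: "\<forall>j<m. u 0 j = (1 / sqrt (real m)) *\<^sub>R \<Theta> j"
    and init_w: "\<forall>j<m. w 0 j = s j * norm (\<Theta> j) / sqrt (real m)"
    and flow_w: "\<forall>j<m. \<forall>t\<ge>0. ((\<lambda>t. w t j) has_real_derivative
                   flow_w n x y m (w t) (u t) j) (at t within {0..})"
    and flow_u: "\<forall>j<m. \<forall>t\<ge>0. ((\<lambda>t. u t j) has_vector_derivative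
                   flow_u n x y m (w t) (u t) j) (at t within {0..})"
    and lim_w: "\<forall>j<m. ((\<lambda>t. w t j) \<longlongrightarrow> w_inf j) at_top"
    and lim_u: "\<forall>j<m. ((\<lambda>t. u t j) \<longlongrightarrow> u_inf j) at_top"
    and stat_w: "\<forall>j<m. flow_w n x y m w_inf u_inf j = 0"
    and stat_u: "\<forall>j<m. flow_u n x y m w_inf u_inf j = 0"
  shows "net m w_inf u_inf \<in> rkhs n x (TstarT n x m s (\<lambda>j. sqrt (real m) *\<^sub>R u_inf j))
       \<and> (\<forall>g \<in> rkhs n x (TstarT n x m s (\<lambda>j. sqrt (real m) *\<^sub>R u_inf j)).
            emp_risk n x y (net m w_inf u_inf) \<le> emp_risk n x y g)"
proof -
  define th where "th = (\<lambda>j. sqrt (real m) *\<^sub>R u_inf j)"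
  define f where "f = net m w_inf u_inf"
  have "\<forall>j<m. w_inf j = s j * norm (u_inf j)"
    using neuron_limit_eq_sign_norm[OF _ _ _ _ flow_w flow_u] sgn init_u init_w lim_w lim_u by blast
  then have f_eq: "f z = (\<Sum>q\<in>th ` {..<m}. norm q * atom_mass m s th q * relu (z \<bullet> q))" for z
    unfolding f_def th_def using net_eq_feature_combination[OF \<open>m \<ge> 1\<close>] by blast
  have f_rkhs: "f \<in> rkhs n x (TstarT n x m s th)"
    by (rule mem_rkhs_of_feature_combination[where b = "\<lambda>q. norm q * atom_mass m s th q"])
       (auto simp: f_eq mult_ac)
  have residual_orth: "\<forall>j<m. (\<Sum>i<n. (y i - f (x i)) * relu (x i \<bullet> th j)) = 0"
    using stationary_residual_orthogonal[OF \<open>n \<ge> 1\<close>, of x y m w_inf u_inf _ "sqrt (real m)"] stat_w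
    unfolding f_def th_def by simp
  have "emp_risk n x y f \<le> emp_risk n x y g" if "g \<in> rkhs n x (TstarT n x m s th)" for g
  proof (rule emp_risk_le_of_orthogonal_residual)
    show "(\<Sum>i<n. (y i - f (x i)) * (f (x i) - g (x i))) = 0"
      using rkhs_orthogonal[OF residual_orth f_rkhs] rkhs_orthogonal[OF residual_orth that]
      by (simp add: right_diff_distrib sum_subtractf)
  qed
  then show ?thesis using f_rkhs unfolding f_def th_def by blast
qed

end
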